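(* Let $b,c$ be rational numbers with $0<b\le b_\sigma$. For each $u\in\mathbf{Z}^n_{\ge0}$ with $0\le u_i<q$ for all $i$, the basic Dwork operator $\Theta_u$ satisfies $\Theta_u(L(b,c))\subseteq L(qb,c)$. In particular, each $\Theta_u$ maps $A$ into $A$.
   Context: $R$ is a complete discrete valuation ring of characteristic $0$ with uniformizer $\pi$, residue field $\mathbf{F}_q$ ($q$ a power of $p$), valuation $\mathrm{ord}_\pi$. Fix $n\ge1$; for $u\in\mathbf{Z}^n_{\ge0}$, $X^u=\prod X_i^{u_i}$, $|u|=\sum u_i$. $A_0=\{\sum a_uX^u:a_u\in R,\ \mathrm{ord}_\pi a_u\to\infty\}$, $A=\{\sum a_uX^u\in A_0:\liminf_{|u|\to\infty}\mathrm{ord}_\pi a_u/|u|>0\}$. $\sigma$ is an $R$-algebra endomorphism of $A_0$ with $\sigma(X_i)=X_i^q+\pi f_i$, $f_i\in A$. For rational $b>0$ and $c$, $L(b,c)=\{\sum_va_vX^v:a_v\in R,\ \mathrm{ord}_\pi a_v\ge b|v|+c\}$. $b_\sigma>0$ is a fixed rational number with $\pi f_i\in L(b_\sigma,0)$ for $1\le i\le n$. The ring $A_0$ is a free $\sigma(A_0)$-module with basis $\{X^u:0\le u_i<q\}$, so every $f\in A_0$ is uniquely $f=\sum_{0\le u_i<q}\sigma(\Theta_u(f))X^u$ with $\Theta_u(f)\in A_0$; these maps $\Theta_u$ are the basic Dwork operators. *)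

theory Defs
  imports Complex_Main "HOL-Computational_Algebra.Primes"
begin

text \<open>Power series in the n variables X_0,...,X_{n-1} over R. An exponent vector
  u in Z^n_{\<ge>0} is a function nat => nat vanishing at indices \<ge> n.\<close>

type_synonym 'r ps = "(nat \<Rightarrow> nat) \<Rightarrow> 'r"

definition exps :: "nat \<Rightarrow> (nat \<Rightarrow> nat) set" where
  "exps n = {u. \<forall>i\<ge>n. u i = 0}"

definition deg :: "nat \<Rightarrow> (nat \<Rightarrow> nat) \<Rightarrow> nat" where
  "deg n u = (\<Sum>i<n. u i)"

definition box :: "nat \<Rightarrow> nat \<Rightarrow> (nat \<Rightarrow> nat) set" where
  "box n q = {u \<in> exps n. \<forall>i<n. u i < q}"

definition is_ps :: "nat \<Rightarrow> 'r::zero ps \<Rightarrow> bool" where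
  "is_ps n f \<longleftrightarrow> (\<forall>u. u \<notin> exps n \<longrightarrow> f u = 0)"

definition mono :: "(nat \<Rightarrow> nat) \<Rightarrow> 'r::{zero,one} ps" where
  "mono u = (\<lambda>v. if v = u then 1 else 0)"

definition const :: "'r::zero \<Rightarrow> 'r ps" where
  "const c = (\<lambda>v. if v = (\<lambda>_. 0) then c else 0)"

definition var :: "nat \<Rightarrow> 'r::{zero,one} ps" where
  "var i = mono (\<lambda>j. if j = i then 1 else 0)"

definition psmult :: "'r::comm_ring_1 ps \<Rightarrow> 'r ps \<Rightarrow> 'r ps" where
  "psmult f g = (\<lambda>u. \<Sum>v\<in>{v. \<forall>i. v i \<le> u i}. f v * g (\<lambda>i. u i - v i))"

definition psadd :: "'r::comm_ring_1 ps \<Rightarrow> 'r ps \<Rightarrow> 'r ps" where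
  "psadd f g = (\<lambda>u. f u + g u)"

definition pssmult :: "'r::comm_ring_1 \<Rightarrow> 'r ps \<Rightarrow> 'r ps" where
  "pssmult c f = (\<lambda>u. c * f u)"

text \<open>A complete discrete valuation ring of characteristic 0 (the characteristic is
  imposed by the type class), with normalized valuation ord (on nonzero elements),
  uniformizer \<pi> and residue field with q elements, q = p^k a prime power.\<close>
definition cdvr :: "('r::{idom,ring_char_0} \<Rightarrow> nat) \<Rightarrow> 'r \<Rightarrow> nat \<Rightarrow> nat \<Rightarrow> bool" where
  "cdvr ord \<pi> p q \<longleftrightarrow>
     (\<forall>x y. x \<noteq> 0 \<longrightarrow> y \<noteq> 0 \<longrightarrow> ord (x * y) = ord x + ord y) \<and>
     (\<forall>x y. x \<noteq> 0 \<longrightarrow> y \<noteq> 0 \<longrightarrow> x + y \<noteq> 0 \<longrightarrow> ord (x + y) \<ge> min (ord x) (ord y)) \<and>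
     (\<forall>x y. x \<noteq> 0 \<longrightarrow> y \<noteq> 0 \<longrightarrow> ord x \<le> ord y \<longrightarrow> x dvd y) \<and>
     (\<forall>x. x \<noteq> 0 \<longrightarrow> (ord x = 0 \<longleftrightarrow> x dvd 1)) \<and>
     \<pi> \<noteq> 0 \<and> ord \<pi> = 1 \<and>
     (\<forall>s::nat \<Rightarrow> 'r.
        (\<forall>N. \<exists>M. \<forall>i\<ge>M. \<forall>j\<ge>M. s i = s j \<or> ord (s i - s j) \<ge> N) \<longrightarrow>
        (\<exists>l. \<forall>N. \<exists>M. \<forall>i\<ge>M. s i = l \<or> ord (s i - l) \<ge> N)) \<and>
     prime p \<and> (\<exists>k\<ge>1. q = p ^ k) \<and>
     (\<exists>S. finite S \<and> card S = q \<and> (\<forall>x. \<exists>!s\<in>S. \<pi> dvd (x - s)))"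

definition A0 :: "nat \<Rightarrow> ('r::zero \<Rightarrow> nat) \<Rightarrow> 'r ps set" where
  "A0 n ord = {f. is_ps n f \<and> (\<forall>N. finite {u. f u \<noteq> 0 \<and> ord (f u) < N})}"

definition A :: "nat \<Rightarrow> ('r::zero \<Rightarrow> nat) \<Rightarrow> 'r ps set" where
  "A n ord = {f \<in> A0 n ord. \<exists>e::real. e > 0 \<and> (\<exists>M. \<forall>u\<in>exps n. deg n u \<ge> M \<longrightarrow>
       f u = 0 \<or> real (ord (f u)) \<ge> e * real (deg n u))}"

definition L :: "nat \<Rightarrow> ('r::zero \<Rightarrow> nat) \<Rightarrow> rat \<Rightarrow> rat \<Rightarrow> 'r ps set" where
  "L n ord b c = {f. is_ps n f \<and> (\<forall>u\<in>exps n.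
       f u = 0 \<or> real (ord (f u)) \<ge> real_of_rat b * real (deg n u) + real_of_rat c)}"

definition frob_lift :: "nat \<Rightarrow> ('r::comm_ring_1 \<Rightarrow> nat) \<Rightarrow> 'r \<Rightarrow> nat \<Rightarrow>
    ('r ps \<Rightarrow> 'r ps) \<Rightarrow> (nat \<Rightarrow> 'r ps) \<Rightarrow> rat \<Rightarrow> bool" where
  "frob_lift n ord \<pi> q \<sigma> fs b\<sigma> \<longleftrightarrow>
     (\<forall>f\<in>A0 n ord. \<sigma> f \<in> A0 n ord) \<and>
     (\<forall>f\<in>A0 n ord. \<forall>g\<in>A0 n ord. \<sigma> (psadd f g) = psadd (\<sigma> f) (\<sigma> g)) \<and>
     (\<forall>f\<in>A0 n ord. \<forall>g\<in>A0 n ord. \<sigma> (psmult f g) = psmult (\<sigma> f) (\<sigma> g)) \<and>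
     (\<forall>c. \<forall>f\<in>A0 n ord. \<sigma> (pssmult c f) = pssmult c (\<sigma> f)) \<and>
     \<sigma> (const 1) = const 1 \<and>
     b\<sigma> > 0 \<and>
     (\<forall>i<n. fs i \<in> A n ord \<and> pssmult \<pi> (fs i) \<in> L n ord b\<sigma> 0 \<and>
        \<sigma> (var i) = psadd (mono (\<lambda>j. if j = i then q else 0)) (pssmult \<pi> (fs i)))"

definition decomp :: "nat \<Rightarrow> ('r::comm_ring_1 \<Rightarrow> nat) \<Rightarrow> nat \<Rightarrow> ('r ps \<Rightarrow> 'r ps) \<Rightarrow>
    'r ps \<Rightarrow> ((nat \<Rightarrow> nat) \<Rightarrow> 'r ps) \<Rightarrow> bool" where
  "decomp n ord q \<sigma> f g \<longleftrightarrow>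
     (\<forall>u\<in>box n q. g u \<in> A0 n ord) \<and> (\<forall>u. u \<notin> box n q \<longrightarrow> g u = (\<lambda>_. 0)) \<and>
     f = (\<lambda>w. \<Sum>u\<in>box n q. psmult (\<sigma> (g u)) (mono u) w)"

definition Theta :: "nat \<Rightarrow> ('r::comm_ring_1 \<Rightarrow> nat) \<Rightarrow> nat \<Rightarrow> ('r ps \<Rightarrow> 'r ps) \<Rightarrow>
    (nat \<Rightarrow> nat) \<Rightarrow> 'r ps \<Rightarrow> 'r ps" where
  "Theta n ord q \<sigma> u f = (THE g. decomp n ord q \<sigma> f g) u"

end

theory Submission
  imports Defs
begin

text \<open>Write \<open>f = \<Sum> a_v X^v \<in> L(b, c)\<close> and split every exponent as \<open>v = q w + u\<close> with \<open>u\<close> in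
  the box. Since \<open>\<sigma>(X^w) \<in> L(b, - q b |w|)\<close> and \<open>\<sigma>(X^w) \<equiv> X^(q w)\<close> modulo \<open>\<pi>\<close>, the
  polynomials \<open>g_u = \<Sum>_{|w| \<le> D} a_(q w + u) X^w\<close> lie in \<open>L(q b, c)\<close>, and \<open>T = \<Sum>_u \<sigma>(g_u) X^u\<close>
  is congruent to \<open>f\<close> modulo \<open>\<pi>\<close> as soon as \<open>D\<close> is so large that the discarded coefficients
  have positive valuation. Hence \<open>f = T + \<pi> R\<close> with \<open>R \<in> L(b, c - 1)\<close>, and
  \<open>\<Theta>_u(f) = g_u + \<pi> \<Theta>_u(R)\<close>. Iterating \<open>N\<close> times shows that the coefficient of \<open>X^w\<close> in
  \<open>\<Theta>_u(f)\<close> has valuation at least \<open>min(N, q b |w| + c)\<close>, so \<open>\<Theta>_u(f) \<in> L(q b, c)\<close>. As \<open>A\<close>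
  is the union of the \<open>L(b, c)\<close> with \<open>0 < b \<le> b_\<sigma>\<close>, this also gives \<open>\<Theta>_u(A) \<subseteq> A\<close>.\<close>

section \<open>Exponent vectors\<close>

lemma finite_exps_deg_le: "finite {u \<in> exps n. deg n u \<le> K}"
proof -
  have "{u \<in> exps n. deg n u \<le> K} \<subseteq>
      {u. \<forall>i. (i \<in> {..<n} \<longrightarrow> u i \<in> {..K}) \<and> (i \<notin> {..<n} \<longrightarrow> u i = 0)}"
  proof
    fix u assume u: "u \<in> {u \<in> exps n. deg n u \<le> K}"
    have "u i \<le> K" if "i < n" for i
      using u that member_le_sum[of i "{..<n}" u] by (simp add: deg_def)
    then show "u \<in> {u. \<forall>i. (i \<in> {..<n} \<longrightarrow> u i \<in> {..K}) \<and> (i \<notin> {..<n} \<longrightarrow> u i = 0)}"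
      using u by (auto simp: exps_def)
  qed
  then show ?thesis
    by (rule finite_subset) (rule finite_set_of_finite_funs; simp)
qed

lemma exps_le: "u \<in> exps n \<Longrightarrow> \<forall>i. v i \<le> u i \<Longrightarrow> v \<in> exps n"
  by (auto simp: exps_def) (metis le_zero_eq)

lemma exps_diff: "u \<in> exps n \<Longrightarrow> (\<lambda>i. u i - v i) \<in> exps n"
  unfolding exps_def by auto

lemma exps_add: "a \<in> exps n \<Longrightarrow> b \<in> exps n \<Longrightarrow> (\<lambda>i. a i + b i) \<in> exps n"
  unfolding exps_def by auto

lemma exps_mult: "a \<in> exps n \<Longrightarrow> (\<lambda>i. k * a i) \<in> exps n"
  unfolding exps_def by auto

lemma deg_add: "deg n (\<lambda>i. a i + b i) = deg n a + deg n b"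
  by (simp add: deg_def sum.distrib)

lemma deg_mult: "deg n (\<lambda>i. k * a i) = k * deg n a"
  by (simp add: deg_def sum_distrib_left)

lemma finite_exps_le: "u \<in> exps n \<Longrightarrow> finite {v. \<forall>i. v i \<le> u i}"
proof -
  assume u: "u \<in> exps n"
  have "deg n v \<le> deg n u" if "\<forall>i. v i \<le> u i" for v
    using that by (simp add: deg_def sum_mono)
  then have "{v. \<forall>i. v i \<le> u i} \<subseteq> {v \<in> exps n. deg n v \<le> deg n u}"
    using exps_le[OF u] by blast
  then show ?thesis
    using finite_exps_deg_le finite_subset by blast
qed

lemma exps_induct [consumes 1, case_names zero unit add]:
  assumes "w \<in> exps n"
    and "P (\<lambda>_. 0)"
    and "\<And>i. i < n \<Longrightarrow> P (\<lambda>j. if j = i then 1 else 0)"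
    and "\<And>a b. a \<in> exps n \<Longrightarrow> b \<in> exps n \<Longrightarrow> P a \<Longrightarrow> P b \<Longrightarrow> P (\<lambda>i. a i + b i)"
  shows "P w"
  using assms(1)
proof (induction "deg n w" arbitrary: w)
  case 0
  then have "w = (\<lambda>_. 0)"
    by (auto simp: deg_def exps_def fun_eq_iff) (metis lessThan_iff not_le)
  then show ?case using assms(2) by simp
next
  case (Suc k)
  then obtain i where i: "i < n" "w i > 0"
    by (metis deg_def gr0I lessThan_iff sum.neutral nat.distinct(1))
  define e where "e = (\<lambda>j. if j = i then 1 else 0 :: nat)"
  define w' where "w' = w(i := w i - 1)"
  have w: "w = (\<lambda>j. w' j + e j)" and w': "w' \<in> exps n" and e: "e \<in> exps n"
    using i Suc.prems by (auto simp: w'_def e_def exps_def)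
  have "deg n e = 1"
    using i by (simp add: e_def deg_def)
  then have "deg n w' = k"
    using Suc.hyps(2) deg_add[of n w' e] w by simp
  then have "P w'"
    using Suc.hyps(1) w' by simp
  moreover have "P e"
    using assms(3)[OF i(1)] by (simp add: e_def)
  ultimately show ?case
    using assms(4)[OF w' e] w by simp
qed

lemma box_subset_exps: "box n q \<subseteq> exps n"
  by (auto simp: box_def)

lemma finite_box: "finite (box n q)"
proof -
  have "box n q \<subseteq> {u \<in> exps n. deg n u \<le> n * q}"
  proof
    fix u assume u: "u \<in> box n q"
    then have "deg n u \<le> (\<Sum>i<n. q)"
      unfolding deg_def by (intro sum_mono) (auto simp: box_def less_imp_le)
    then show "u \<in> {u \<in> exps n. deg n u \<le> n * q}"
      using u by (auto simp: box_def)
  qed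
  then show ?thesis
    using finite_exps_deg_le finite_subset by blast
qed

lemma exps_mod_div:
  assumes "0 < q" "v \<in> exps n"
  shows "(\<lambda>i. v i mod q) \<in> box n q" "(\<lambda>i. v i div q) \<in> exps n"
  using assms by (auto simp: box_def exps_def)

lemma box_digits_iff:
  assumes "0 < q" "u \<in> box n q"
  shows "v = (\<lambda>i. q * w i + u i) \<longleftrightarrow> u = (\<lambda>i. v i mod q) \<and> w = (\<lambda>i. v i div q)"
proof -
  have "u i < q" for i
    using assms by (cases "i < n") (auto simp: box_def exps_def)
  then show ?thesis
    using assms(1) by (auto simp: fun_eq_iff)
qed

section \<open>Power series\<close>

lemma sum_mono_apply:
  "finite S \<Longrightarrow> (\<Sum>w\<in>S. c w * mono w v) = (if v \<in> S then c v else (0::'r::comm_ring_1))"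
  by (simp add: Defs.mono_def if_distrib sum.delta' cong: if_cong)

lemma psmult_out:
  assumes "is_ps n f" "is_ps n g" "u \<notin> exps n"
  shows "psmult f g u = 0"
proof -
  obtain i where i: "n \<le> i" "u i \<noteq> 0"
    using assms(3) by (auto simp: exps_def)
  have "f v * g (\<lambda>i. u i - v i) = 0" for v
  proof (cases "v i = 0")
    case True
    then have "(\<lambda>i. u i - v i) \<notin> exps n"
      using i by (auto simp: exps_def)
    then show ?thesis using assms(2) by (simp add: is_ps_def)
  next
    case False
    then have "v \<notin> exps n"
      using i by (auto simp: exps_def)
    then show ?thesis using assms(1) by (simp add: is_ps_def)
  qed
  then show ?thesis
    unfolding psmult_def by simp
qed

lemma psmult_mono_mono:
  assumes "a \<in> exps n" "b \<in> exps n"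
  shows "psmult (mono a) (mono b) = (mono (\<lambda>i. a i + b i) :: 'r::comm_ring_1 ps)"
proof
  fix u
  have split: "(\<forall>i. a i \<le> u i) \<and> (\<lambda>i. u i - a i) = b \<longleftrightarrow> u = (\<lambda>i. a i + b i)"
    by (auto simp: fun_eq_iff) (metis le_add_diff_inverse)
  have "psmult (mono a) (mono b) u =
      (\<Sum>v\<in>{v. \<forall>i. v i \<le> u i}. if v = a then mono b (\<lambda>i. u i - a i) else 0 :: 'r)"
    unfolding psmult_def by (intro sum.cong) (auto simp: Defs.mono_def)
  also have "\<dots> = (if u = (\<lambda>i. a i + b i) then 1 else 0)"
  proof (cases "finite {v. \<forall>i. v i \<le> u i}")
    case True
    then show ?thesis
      by (simp add: sum.delta' Defs.mono_def flip: split)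
  next
    case False
    then have "u \<noteq> (\<lambda>i. a i + b i)"
      using finite_exps_le exps_add[OF assms] by blast
    with False show ?thesis by simp
  qed
  also have "\<dots> = mono (\<lambda>i. a i + b i) u"
    by (simp add: Defs.mono_def)
  finally show "psmult (mono a) (mono b) u = (mono (\<lambda>i. a i + b i) :: 'r ps) u" .
qed

lemma psmult_add_left: "psmult (psadd f g) h = psadd (psmult f h) (psmult g h)"
  unfolding psmult_def psadd_def by (simp add: algebra_simps sum.distrib)

lemma psmult_smult_left: "psmult (pssmult a f) h = pssmult a (psmult f h)"
  unfolding psmult_def pssmult_def by (simp add: sum_distrib_left algebra_simps)

lemma psmult_sum_left:
  "psmult (\<lambda>v. \<Sum>s\<in>S. f s v) h = (\<lambda>u. \<Sum>s\<in>S. psmult (f s) h u)"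
  unfolding psmult_def by (simp add: sum_distrib_right sum.swap[of _ S])

lemma sum_digits_mono_apply:
  assumes "0 < q" "finite W"
  shows "(\<Sum>u\<in>box n q. \<Sum>w\<in>W. a (\<lambda>i. q * w i + u i) * mono (\<lambda>i. q * w i + u i) v) =
    (if (\<lambda>i. v i mod q) \<in> box n q \<and> (\<lambda>i. v i div q) \<in> W then a v else (0::'r::comm_ring_1))"
proof -
  have "(\<Sum>u\<in>box n q. \<Sum>w\<in>W. a (\<lambda>i. q * w i + u i) * mono (\<lambda>i. q * w i + u i) v) =
      (\<Sum>u\<in>box n q. \<Sum>w\<in>W. if w = (\<lambda>i. v i div q) then if u = (\<lambda>i. v i mod q) then a v else 0 else 0)"
    using box_digits_iff[OF assms(1)] by (intro sum.cong refl) (auto simp: Defs.mono_def)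
  also have "\<dots> = (if (\<lambda>i. v i mod q) \<in> box n q \<and> (\<lambda>i. v i div q) \<in> W then a v else 0)"
    using finite_box assms(2) by (cases "(\<lambda>i. v i div q) \<in> W") (simp_all add: sum.delta')
  finally show ?thesis .
qed

definition ps_cong :: "'r::comm_ring_1 \<Rightarrow> 'r ps \<Rightarrow> 'r ps \<Rightarrow> bool" where
  "ps_cong p f g \<longleftrightarrow> (\<forall>v. p dvd f v - g v)"

lemma ps_cong_refl [simp]: "ps_cong p f f"
  by (simp add: ps_cong_def)

lemma ps_cong_sym: "ps_cong p f g \<Longrightarrow> ps_cong p g f"
  unfolding ps_cong_def by (metis dvd_minus_iff minus_diff_eq)

lemma ps_cong_trans: "ps_cong p f g \<Longrightarrow> ps_cong p g h \<Longrightarrow> ps_cong p f h"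
  unfolding ps_cong_def by (metis diff_add_cancel add_diff_eq dvd_add)

lemma ps_cong_smult: "ps_cong p f g \<Longrightarrow> ps_cong p (pssmult a f) (pssmult a g)"
  unfolding ps_cong_def pssmult_def by (metis dvd_mult right_diff_distrib)

lemma ps_cong_sum:
  "(\<And>s. s \<in> S \<Longrightarrow> ps_cong p (f s) (g s)) \<Longrightarrow>
    ps_cong p (\<lambda>v. \<Sum>s\<in>S. f s v) (\<lambda>v. \<Sum>s\<in>S. g s v)"
  unfolding ps_cong_def by (simp add: dvd_sum flip: sum_subtractf)

lemma ps_cong_psmult:
  assumes "ps_cong p f f'" "ps_cong p g g'"
  shows "ps_cong p (psmult f g) (psmult f' g')"
  unfolding ps_cong_def psmult_def
proof (intro allI, subst sum_subtractf[symmetric], intro dvd_sum)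
  fix u v
  have "f v * g (\<lambda>i. u i - v i) - f' v * g' (\<lambda>i. u i - v i) =
      (f v - f' v) * g (\<lambda>i. u i - v i) + f' v * (g (\<lambda>i. u i - v i) - g' (\<lambda>i. u i - v i))"
    by (simp add: algebra_simps)
  then show "p dvd f v * g (\<lambda>i. u i - v i) - f' v * g' (\<lambda>i. u i - v i)"
    using assms unfolding ps_cong_def by (simp add: dvd_add)
qed

section \<open>The sets \<open>L(b, c)\<close> and \<open>A\<close>\<close>

text \<open>\<open>L(b, c)\<close> with real parameters; \<open>ord_ge ord K x\<close> reads \<open>ord x \<ge> K\<close> with \<open>ord 0 = \<infinity>\<close>.\<close>

definition ord_ge :: "('r::zero \<Rightarrow> nat) \<Rightarrow> real \<Rightarrow> 'r \<Rightarrow> bool" where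
  "ord_ge ord K x \<longleftrightarrow> x = 0 \<or> K \<le> real (ord x)"

definition Lreal :: "nat \<Rightarrow> ('r::zero \<Rightarrow> nat) \<Rightarrow> real \<Rightarrow> real \<Rightarrow> 'r ps set" where
  "Lreal n ord b c =
     {f. is_ps n f \<and> (\<forall>u\<in>exps n. ord_ge ord (b * real (deg n u) + c) (f u))}"

lemma L_eq_Lreal: "L n ord b c = Lreal n ord (real_of_rat b) (real_of_rat c)"
  unfolding L_def Lreal_def ord_ge_def by auto

lemma ord_ge_0 [simp]: "ord_ge ord K 0"
  by (simp add: ord_ge_def)

lemma ord_ge_ord: "ord_ge ord (real (ord x)) x"
  by (simp add: ord_ge_def)

lemma ord_ge_mono: "ord_ge ord K x \<Longrightarrow> K' \<le> K \<Longrightarrow> ord_ge ord K' x"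
  unfolding ord_ge_def by auto

lemma Lreal_mono:
  assumes "f \<in> Lreal n ord b c" "b' \<le> b" "c' \<le> c"
  shows "f \<in> Lreal n ord b' c'"
proof -
  have "b' * real (deg n u) + c' \<le> b * real (deg n u) + c" for u
    using assms(2,3) by (simp add: add_mono mult_right_mono)
  then show ?thesis
    using assms(1) unfolding Lreal_def by (auto intro: ord_ge_mono)
qed

lemma zero_Lreal [simp]: "(\<lambda>_. 0) \<in> Lreal n ord b c"
  by (simp add: Lreal_def is_ps_def)

lemma mono_Lreal: "u \<in> exps n \<Longrightarrow> mono u \<in> Lreal n ord b (- b * real (deg n u))"
  unfolding Lreal_def Defs.mono_def is_ps_def ord_ge_def by auto

lemma sum_mono_Lreal:
  fixes b c :: real and a :: "(nat \<Rightarrow> nat) \<Rightarrow> 'r::comm_ring_1"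
  assumes "finite S" "S \<subseteq> exps n" "\<And>w. w \<in> S \<Longrightarrow> ord_ge ord (b * deg n w + c) (a w)"
  shows "(\<lambda>v. \<Sum>w\<in>S. a w * mono w v) \<in> Lreal n ord b c"
  using assms by (auto simp: Lreal_def is_ps_def sum_mono_apply subset_iff)

lemma Lreal_A0:
  assumes "0 < b" "f \<in> Lreal n ord b c"
  shows "f \<in> A0 n ord"
proof -
  have "finite {u. f u \<noteq> 0 \<and> ord (f u) < N}" for N
  proof -
    obtain K :: nat where K: "(real N - c) / b \<le> real K"
      using real_arch_simple by blast
    have "{u. f u \<noteq> 0 \<and> ord (f u) < N} \<subseteq> {u \<in> exps n. deg n u \<le> K}"
    proof
      fix u assume u: "u \<in> {u. f u \<noteq> 0 \<and> ord (f u) < N}"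
      then have "u \<in> exps n"
        using assms(2) by (auto simp: Lreal_def is_ps_def)
      moreover from this have "b * real (deg n u) + c < real N"
        using assms(2) u by (fastforce simp: Lreal_def ord_ge_def)
      then have "real (deg n u) < (real N - c) / b"
        using assms(1) by (simp add: field_simps)
      ultimately show "u \<in> {u \<in> exps n. deg n u \<le> K}"
        using K by simp
    qed
    then show ?thesis
      using finite_exps_deg_le finite_subset by blast
  qed
  then show ?thesis
    using assms(2) by (simp add: A0_def Lreal_def)
qed

lemma zero_A0: "(\<lambda>_. 0) \<in> A0 n ord"
  using Lreal_A0[of 1 "\<lambda>_. 0"] by simp

lemma mono_A0: "u \<in> exps n \<Longrightarrow> mono u \<in> A0 n ord"
  using Lreal_A0[OF _ mono_Lreal[where b = 1]] by simp

lemma Lreal_A: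
  assumes "0 < b" "f \<in> Lreal n ord b c"
  shows "f \<in> A n ord"
proof -
  obtain M :: nat where M: "- 2 * c / b \<le> real M"
    using real_arch_simple by blast
  have "f u = 0 \<or> b / 2 * real (deg n u) \<le> real (ord (f u))"
    if "u \<in> exps n" "M \<le> deg n u" for u
  proof -
    have "- 2 * c \<le> b * real M"
      using M assms(1) by (simp add: field_simps)
    also have "\<dots> \<le> b * real (deg n u)"
      using that(2) assms(1) by simp
    finally have "- 2 * c \<le> b * real (deg n u)" .
    then show ?thesis
      using assms(2) that(1) by (auto simp: Lreal_def ord_ge_def)
  qed
  moreover have "0 < b / 2"
    using assms(1) by simp
  ultimately show ?thesis
    using Lreal_A0[OF assms] unfolding A_def by blast
qed

lemma A_imp_L:
  assumes "f \<in> A n ord" "0 < \<beta>"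
  obtains b' c' where "0 < b'" "b' \<le> \<beta>" "f \<in> L n ord b' c'"
proof -
  obtain e M where e: "0 < e" and fA0: "f \<in> A0 n ord"
    and eM: "\<And>u. u \<in> exps n \<Longrightarrow> M \<le> deg n u \<Longrightarrow> f u = 0 \<or> e * real (deg n u) \<le> real (ord (f u))"
    using assms(1) unfolding A_def by blast
  obtain r :: rat where r: "0 < real_of_rat r" "real_of_rat r < e"
    using of_rat_dense[OF e] by blast
  define b' where "b' = min \<beta> r"
  define c' where "c' = - b' * of_nat M"
  have b'_pos: "0 < b'"
    using assms(2) r(1) by (simp add: b'_def)
  have "real_of_rat b' \<le> real_of_rat r"
    by (simp add: b'_def of_rat_less_eq)
  then have b'_le: "real_of_rat b' \<le> e"
    using r(2) by simp
  have c': "real_of_rat c' = - real_of_rat b' * real M"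
    by (simp add: c'_def of_rat_minus of_rat_mult)
  have "ord_ge ord (real_of_rat b' * real (deg n u) + real_of_rat c') (f u)"
    if "u \<in> exps n" for u
  proof (cases "M \<le> deg n u")
    case True
    have "real_of_rat b' * real (deg n u) \<le> e * real (deg n u)"
      using b'_le by (simp add: mult_right_mono)
    moreover have "real_of_rat c' \<le> 0"
      using c' b'_pos by simp
    ultimately show ?thesis
      using eM[OF that True] unfolding ord_ge_def by linarith
  next
    case False
    then have "real_of_rat b' * real (deg n u) \<le> real_of_rat b' * real M"
      using b'_pos by (simp add: mult_left_mono)
    then show ?thesis
      using c' by (simp add: ord_ge_def)
  qed
  then have "f \<in> L n ord b' c'"
    using fA0 by (simp add: L_eq_Lreal Lreal_def A0_def)
  moreover have "b' \<le> \<beta>"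
    by (simp add: b'_def)
  ultimately show thesis
    using that b'_pos by blast
qed

section \<open>Discrete valuations\<close>

locale discrete_valuation =
  fixes ord :: "'r::idom \<Rightarrow> nat" and \<pi> :: 'r
  assumes ord_mult: "x \<noteq> 0 \<Longrightarrow> y \<noteq> 0 \<Longrightarrow> ord (x * y) = ord x + ord y"
    and ord_add: "x \<noteq> 0 \<Longrightarrow> y \<noteq> 0 \<Longrightarrow> x + y \<noteq> 0 \<Longrightarrow> min (ord x) (ord y) \<le> ord (x + y)"
    and ord_le_imp_dvd: "x \<noteq> 0 \<Longrightarrow> y \<noteq> 0 \<Longrightarrow> ord x \<le> ord y \<Longrightarrow> x dvd y"
    and ord_eq_0_iff_dvd_1: "x \<noteq> 0 \<Longrightarrow> ord x = 0 \<longleftrightarrow> x dvd 1"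
    and uniformizer_nonzero: "\<pi> \<noteq> 0"
    and ord_uniformizer: "ord \<pi> = 1"

lemma cdvr_imp_discrete_valuation: "cdvr ord \<pi> p q \<Longrightarrow> discrete_valuation ord \<pi>"
  unfolding cdvr_def by unfold_locales simp_all

lemma cdvr_imp_q_pos: "cdvr ord \<pi> p q \<Longrightarrow> 0 < q"
  unfolding cdvr_def using prime_gt_0_nat by auto

context discrete_valuation
begin

lemma ord_uminus [simp]: "ord (- x) = ord x"
proof (cases "x = 0")
  case False
  have "ord (- 1) = 0"
    using ord_eq_0_iff_dvd_1[of "- 1"] by simp
  then show ?thesis
    using ord_mult[of "- 1" x] False by simp
qed simp

lemma uniformizer_dvd: "x \<noteq> 0 \<Longrightarrow> 1 \<le> ord x \<Longrightarrow> \<pi> dvd x"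
  using ord_le_imp_dvd[of \<pi> x] uniformizer_nonzero ord_uniformizer by simp

lemma ord_ge_add: "ord_ge ord K x \<Longrightarrow> ord_ge ord K y \<Longrightarrow> ord_ge ord K (x + y)"
  unfolding ord_ge_def
  by (cases "x = 0 \<or> y = 0 \<or> x + y = 0")
    (auto dest!: ord_add[of x y] simp: min_def split: if_splits)

lemma ord_ge_uminus: "ord_ge ord K x \<Longrightarrow> ord_ge ord K (- x)"
  by (simp add: ord_ge_def)

lemma ord_ge_diff: "ord_ge ord K x \<Longrightarrow> ord_ge ord K y \<Longrightarrow> ord_ge ord K (x - y)"
  using ord_ge_add[of K x "- y"] ord_ge_uminus[of K y] by simp

lemma ord_ge_sum:
  "(\<And>s. s \<in> S \<Longrightarrow> ord_ge ord K (h s)) \<Longrightarrow> ord_ge ord K (\<Sum>s\<in>S. h s)"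
  by (induction S rule: infinite_finite_induct) (auto intro: ord_ge_add)

lemma ord_ge_mult: "ord_ge ord K x \<Longrightarrow> ord_ge ord K' y \<Longrightarrow> ord_ge ord (K + K') (x * y)"
  unfolding ord_ge_def by (cases "x = 0"; cases "y = 0") (auto simp: ord_mult)

lemma Lreal_add: "f \<in> Lreal n ord b c \<Longrightarrow> g \<in> Lreal n ord b c \<Longrightarrow> psadd f g \<in> Lreal n ord b c"
  unfolding Lreal_def psadd_def is_ps_def by (auto intro: ord_ge_add)

lemma Lreal_sum:
  "(\<And>s. s \<in> S \<Longrightarrow> h s \<in> Lreal n ord b c) \<Longrightarrow> (\<lambda>v. \<Sum>s\<in>S. h s v) \<in> Lreal n ord b c"
  unfolding Lreal_def is_ps_def by (auto intro!: ord_ge_sum)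

lemma Lreal_smult:
  assumes "f \<in> Lreal n ord b c"
  shows "pssmult a f \<in> Lreal n ord b (c + real (ord a))"
proof -
  have "ord_ge ord (b * real (deg n u) + (c + real (ord a))) (a * f u)" if "u \<in> exps n" for u
  proof -
    have "ord_ge ord (real (ord a) + (b * real (deg n u) + c)) (a * f u)"
      using assms that by (intro ord_ge_mult ord_ge_ord) (simp add: Lreal_def)
    then show ?thesis
      by (simp add: algebra_simps)
  qed
  then show ?thesis
    using assms by (simp add: Lreal_def pssmult_def is_ps_def)
qed

lemma Lreal_mult:
  assumes f: "f \<in> Lreal n ord b c" and g: "g \<in> Lreal n ord b c'"
  shows "psmult f g \<in> Lreal n ord b (c + c')"
proof -
  have "ord_ge ord (b * real (deg n u) + (c + c')) (psmult f g u)" if u: "u \<in> exps n" for u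
    unfolding psmult_def
  proof (rule ord_ge_sum)
    fix v assume "v \<in> {v. \<forall>i. v i \<le> u i}"
    then have v: "\<forall>i. v i \<le> u i" by simp
    have "deg n v + deg n (\<lambda>i. u i - v i) = deg n u"
      using v deg_add[of n v "\<lambda>i. u i - v i"] by (simp add: le_add_diff_inverse)
    then have "real (deg n u) = real (deg n v) + real (deg n (\<lambda>i. u i - v i))"
      by simp
    then have "(b * real (deg n v) + c) + (b * real (deg n (\<lambda>i. u i - v i)) + c') =
        b * real (deg n u) + (c + c')"
      by (simp add: algebra_simps)
    moreover have "ord_ge ord ((b * real (deg n v) + c) + (b * real (deg n (\<lambda>i. u i - v i)) + c'))
        (f v * g (\<lambda>i. u i - v i))"
      using f g exps_le[OF u v] exps_diff[OF u] by (intro ord_ge_mult) (auto simp: Lreal_def)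
    ultimately show "ord_ge ord (b * real (deg n u) + (c + c')) (f v * g (\<lambda>i. u i - v i))"
      by metis
  qed
  moreover have "is_ps n (psmult f g)"
    using f g psmult_out unfolding Lreal_def is_ps_def by blast
  ultimately show ?thesis
    by (simp add: Lreal_def)
qed

lemma Lreal_ps_cong_uniformizer:
  assumes "f \<in> Lreal n ord b c" "T \<in> Lreal n ord b c" "ps_cong \<pi> f T"
  obtains R where "f = psadd T (pssmult \<pi> R)" "R \<in> Lreal n ord b (c - 1)"
proof
  define R where "R v = (SOME r. f v - T v = \<pi> * r)" for v
  have fR: "f v - T v = \<pi> * R v" for v
    using assms(3) unfolding R_def ps_cong_def dvd_def by (metis (mono_tags) someI_ex)
  then show "f = psadd T (pssmult \<pi> R)"
    by (auto simp: fun_eq_iff psadd_def pssmult_def algebra_simps)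
  have "ord_ge ord (b * real (deg n v) + (c - 1)) (R v)" if v: "v \<in> exps n" for v
  proof (cases "R v = 0")
    case False
    then have "ord (f v - T v) = 1 + ord (R v)"
      using fR ord_mult[OF uniformizer_nonzero False] ord_uniformizer by simp
    moreover have "ord_ge ord (b * real (deg n v) + c) (f v - T v)"
      using assms(1,2) v by (intro ord_ge_diff) (auto simp: Lreal_def)
    ultimately show ?thesis
      using False uniformizer_nonzero fR by (auto simp: ord_ge_def)
  qed simp
  moreover have "is_ps n R"
    unfolding is_ps_def
  proof (intro allI impI)
    fix v assume "v \<notin> exps n"
    then have "\<pi> * R v = 0"
      using assms(1,2) fR[of v] by (simp add: Lreal_def is_ps_def)
    then show "R v = 0"
      using uniformizer_nonzero by simp
  qed
  ultimately show "R \<in> Lreal n ord b (c - 1)"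
    by (simp add: Lreal_def)
qed

lemma A0_add: "f \<in> A0 n ord \<Longrightarrow> g \<in> A0 n ord \<Longrightarrow> psadd f g \<in> A0 n ord"
proof -
  assume f: "f \<in> A0 n ord" and g: "g \<in> A0 n ord"
  have "{u. psadd f g u \<noteq> 0 \<and> ord (psadd f g u) < N} \<subseteq>
      {u. f u \<noteq> 0 \<and> ord (f u) < N} \<union> {u. g u \<noteq> 0 \<and> ord (g u) < N}" for N
  proof
    fix u assume u: "u \<in> {u. psadd f g u \<noteq> 0 \<and> ord (psadd f g u) < N}"
    show "u \<in> {u. f u \<noteq> 0 \<and> ord (f u) < N} \<union> {u. g u \<noteq> 0 \<and> ord (g u) < N}"
    proof (rule ccontr)
      assume "u \<notin> {u. f u \<noteq> 0 \<and> ord (f u) < N} \<union> {u. g u \<noteq> 0 \<and> ord (g u) < N}"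
      then have "ord_ge ord (real N) (f u + g u)"
        by (intro ord_ge_add) (auto simp: ord_ge_def)
      then show False
        using u by (simp add: psadd_def ord_ge_def)
    qed
  qed
  moreover have "finite ({u. f u \<noteq> 0 \<and> ord (f u) < N} \<union> {u. g u \<noteq> 0 \<and> ord (g u) < N})" for N
    using f g by (simp add: A0_def)
  ultimately have "finite {u. psadd f g u \<noteq> 0 \<and> ord (psadd f g u) < N}" for N
    by (rule finite_subset)
  then show ?thesis
    using f g by (simp add: A0_def is_ps_def psadd_def)
qed

lemma A0_smult: "f \<in> A0 n ord \<Longrightarrow> pssmult a f \<in> A0 n ord"
proof -
  assume f: "f \<in> A0 n ord"
  have "{u. pssmult a f u \<noteq> 0 \<and> ord (pssmult a f u) < N} \<subseteq> {u. f u \<noteq> 0 \<and> ord (f u) < N}" for N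
    by (auto simp: pssmult_def ord_mult)
  moreover have "finite {u. f u \<noteq> 0 \<and> ord (f u) < N}" for N
    using f by (simp add: A0_def)
  ultimately have "finite {u. pssmult a f u \<noteq> 0 \<and> ord (pssmult a f u) < N}" for N
    by (rule finite_subset)
  then show ?thesis
    using f by (simp add: A0_def is_ps_def pssmult_def)
qed

lemma A0_sum: "(\<And>s. s \<in> S \<Longrightarrow> h s \<in> A0 n ord) \<Longrightarrow> (\<lambda>v. \<Sum>s\<in>S. h s v) \<in> A0 n ord"
proof (induction S rule: infinite_finite_induct)
  case (insert s S)
  then show ?case
    using A0_add[where f = "h s" and g = "\<lambda>v. \<Sum>s\<in>S. h s v"] by (simp add: psadd_def)
qed (simp_all add: zero_A0)

lemma ps_cong_truncation:
  assumes "0 < q" "0 < b" "f \<in> Lreal n ord b c" "(1 - c) / (b * q) \<le> real D"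
  shows "ps_cong \<pi> f (\<lambda>v. \<Sum>u\<in>box n q. \<Sum>w\<in>{w \<in> exps n. deg n w \<le> D}.
            f (\<lambda>i. q * w i + u i) * mono (\<lambda>i. q * w i + u i) v)"
  unfolding ps_cong_def sum_digits_mono_apply[OF assms(1) finite_exps_deg_le]
proof (intro allI)
  fix v :: "nat \<Rightarrow> nat"
  define r where "r = (\<lambda>i. v i mod q)"
  define s where "s = (\<lambda>i. v i div q)"
  have "\<pi> dvd f v" if "f v \<noteq> 0" "deg n s > D"
  proof -
    have "v \<in> exps n"
      using assms(3) that(1) by (auto simp: Lreal_def is_ps_def)
    have "deg n v = q * deg n s + deg n r"
      using deg_add[of n "\<lambda>i. q * s i" r] deg_mult[of n q s] by (simp add: r_def s_def)
    then have "q * (D + 1) \<le> deg n v"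
      using that(2) by (metis Suc_eq_plus1 Suc_leI le_add1 mult_le_mono2 order_trans)
    then have "b * (q * (D + 1)) \<le> b * deg n v"
      using assms(2) by (simp flip: of_nat_mult)
    moreover have "1 - c \<le> b * q * D"
      using assms(1,2,4) by (simp add: field_simps)
    moreover have "0 \<le> b * q"
      using assms(2) by simp
    ultimately have "1 \<le> b * deg n v + c"
      by (simp add: algebra_simps)
    then have "1 \<le> ord (f v)"
      using assms(3) \<open>v \<in> exps n\<close> that(1) by (auto simp: Lreal_def ord_ge_def)
    then show ?thesis
      using uniformizer_dvd that(1) by simp
  qed
  moreover have "r \<in> box n q \<and> s \<in> exps n" if "f v \<noteq> 0"
    using assms(3) that exps_mod_div[OF assms(1), of v n]
    by (auto simp: r_def s_def Lreal_def is_ps_def)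
  ultimately show "\<pi> dvd f v - (if r \<in> box n q \<and> s \<in> {w \<in> exps n. deg n w \<le> D} then f v else 0)"
    by (cases "f v = 0") (auto simp: not_le)
qed

end

section \<open>The Frobenius lift and the Dwork operators\<close>

locale frobenius_lift = discrete_valuation ord \<pi>
  for ord :: "'r::idom \<Rightarrow> nat" and \<pi> :: 'r +
  fixes n q :: nat and \<sigma> :: "'r ps \<Rightarrow> 'r ps" and fs :: "nat \<Rightarrow> 'r ps" and b\<sigma> :: rat
  assumes frob_lift: "frob_lift n ord \<pi> q \<sigma> fs b\<sigma>"
    and q_pos: "0 < q"
begin

lemma sigma_add: "f \<in> A0 n ord \<Longrightarrow> g \<in> A0 n ord \<Longrightarrow> \<sigma> (psadd f g) = psadd (\<sigma> f) (\<sigma> g)"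
  and sigma_mult: "f \<in> A0 n ord \<Longrightarrow> g \<in> A0 n ord \<Longrightarrow> \<sigma> (psmult f g) = psmult (\<sigma> f) (\<sigma> g)"
  and sigma_smult: "f \<in> A0 n ord \<Longrightarrow> \<sigma> (pssmult a f) = pssmult a (\<sigma> f)"
  and sigma_1: "\<sigma> (const 1) = const 1"
  and sigma_var: "i < n \<Longrightarrow>
    \<sigma> (var i) = psadd (mono (\<lambda>j. if j = i then q else 0)) (pssmult \<pi> (fs i))"
  and uniformizer_fs_Lreal: "i < n \<Longrightarrow> pssmult \<pi> (fs i) \<in> Lreal n ord (real_of_rat b\<sigma>) 0"
  using frob_lift by (simp_all add: frob_lift_def L_eq_Lreal)

lemma sigma_zero: "\<sigma> (\<lambda>_. 0) = (\<lambda>_. 0)"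
  using sigma_smult[OF zero_A0, of 0] by (simp add: pssmult_def)

lemma sigma_sum:
  "(\<And>s. s \<in> S \<Longrightarrow> h s \<in> A0 n ord) \<Longrightarrow> \<sigma> (\<lambda>v. \<Sum>s\<in>S. h s v) = (\<lambda>v. \<Sum>s\<in>S. \<sigma> (h s) v)"
proof (induction S rule: infinite_finite_induct)
  case (insert s S)
  have "(\<lambda>v. \<Sum>s\<in>insert s S. h s v) = psadd (h s) (\<lambda>v. \<Sum>s\<in>S. h s v)"
    using insert.hyps by (simp add: psadd_def)
  then show ?case
    using insert sigma_add[of "h s" "\<lambda>v. \<Sum>s\<in>S. h s v"] A0_sum[of S h]
    by (simp add: psadd_def)
qed (simp_all add: sigma_zero)

lemma sigma_mono_add:
  assumes "v \<in> exps n" "w \<in> exps n"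
  shows "\<sigma> (mono (\<lambda>i. v i + w i)) = psmult (\<sigma> (mono v)) (\<sigma> (mono w))"
  using sigma_mult[OF mono_A0 mono_A0, OF assms] by (simp add: psmult_mono_mono[OF assms])

lemma sigma_mono_Lreal:
  fixes b :: real
  assumes "0 < b" "b \<le> real_of_rat b\<sigma>" "w \<in> exps n"
  shows "\<sigma> (mono w) \<in> Lreal n ord b (- (q * b) * deg n w)"
  using assms(3)
proof (induction rule: exps_induct)
  case zero
  have "(mono (\<lambda>_. 0) :: 'r ps) = const 1"
    by (simp add: Defs.mono_def const_def)
  then show ?case
    using sigma_1 mono_Lreal[of "\<lambda>_. 0" n ord b] by (simp add: exps_def deg_def)
next
  case (unit i)
  have e: "(\<lambda>j. if j = i then q else 0) \<in> exps n" "deg n (\<lambda>j. if j = i then q else 0) = q"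
    using unit by (auto simp: exps_def deg_def)
  have "pssmult \<pi> (fs i) \<in> Lreal n ord b (- (q * b))"
    using Lreal_mono[OF uniformizer_fs_Lreal[OF unit] assms(2)] assms(1) by simp
  moreover have "mono (\<lambda>j. if j = i then q else 0) \<in> Lreal n ord b (- (q * b))"
    using mono_Lreal[OF e(1), of ord b] e(2) by (simp add: algebra_simps)
  ultimately show ?case
    using Lreal_add sigma_var[OF unit] unit by (simp add: var_def deg_def)
next
  case (add v w)
  then show ?case
    using Lreal_mult[OF add.IH] sigma_mono_add[OF add.hyps] deg_add[of n v w]
    by (simp add: algebra_simps)
qed

lemma sigma_mono_cong:
  assumes "w \<in> exps n"
  shows "ps_cong \<pi> (\<sigma> (mono w)) (mono (\<lambda>i. q * w i))"
  using assms
proof (induction rule: exps_induct)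
  case zero
  have "(mono (\<lambda>_. 0) :: 'r ps) = const 1"
    by (simp add: Defs.mono_def const_def)
  then show ?case
    using sigma_1 by simp
next
  case (unit i)
  have "(\<lambda>j. q * (if j = i then 1 else 0)) = (\<lambda>j. if j = i then q else 0)"
    by auto
  then show ?case
    using sigma_var[OF unit] by (simp add: var_def ps_cong_def psadd_def pssmult_def)
next
  case (add v w)
  have "ps_cong \<pi> (\<sigma> (mono (\<lambda>i. v i + w i))) (psmult (mono (\<lambda>i. q * v i)) (mono (\<lambda>i. q * w i)))"
    using ps_cong_psmult[OF add.IH] sigma_mono_add[OF add.hyps] by simp
  then show ?case
    by (simp add: psmult_mono_mono[OF exps_mult exps_mult, OF add.hyps] distrib_left)
qed

lemma sigma_poly:
  assumes "S \<subseteq> exps n"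
  shows "\<sigma> (\<lambda>v. \<Sum>w\<in>S. a w * mono w v) = (\<lambda>v. \<Sum>w\<in>S. a w * \<sigma> (mono w) v)"
  using sigma_sum[of S "\<lambda>w. pssmult (a w) (mono w)"] sigma_smult[OF mono_A0]
    A0_smult[OF mono_A0] assms
  by (auto simp: pssmult_def subset_iff)

lemma sigma_poly_Lreal:
  fixes b c :: real
  assumes "0 < b" "b \<le> real_of_rat b\<sigma>" "S \<subseteq> exps n"
    and "\<And>w. w \<in> S \<Longrightarrow> ord_ge ord (q * b * deg n w + c) (a w)"
  shows "\<sigma> (\<lambda>v. \<Sum>w\<in>S. a w * mono w v) \<in> Lreal n ord b c"
  unfolding sigma_poly[OF assms(3)]
proof (rule Lreal_sum)
  fix w assume w: "w \<in> S"
  show "(\<lambda>v. a w * \<sigma> (mono w) v) \<in> Lreal n ord b c"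
  proof (cases "a w = 0")
    case False
    have "c \<le> - (q * b) * deg n w + ord (a w)"
      using assms(4)[OF w] False by (simp add: ord_ge_def)
    then show ?thesis
      using Lreal_mono[OF Lreal_smult[OF sigma_mono_Lreal[OF assms(1,2)]]] assms(3) w
      by (auto simp: pssmult_def)
  qed simp
qed

lemma sigma_digits_Lreal:
  fixes b c :: real
  assumes "0 < b" "b \<le> real_of_rat b\<sigma>" "S \<subseteq> exps n" "U \<subseteq> exps n"
    and "\<And>u w. u \<in> U \<Longrightarrow> w \<in> S \<Longrightarrow> ord_ge ord (q * b * deg n w + (b * deg n u + c)) (a u w)"
  shows "(\<lambda>v. \<Sum>u\<in>U. psmult (\<sigma> (\<lambda>v. \<Sum>w\<in>S. a u w * mono w v)) (mono u) v) \<in> Lreal n ord b c"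
proof (rule Lreal_sum)
  fix u assume u: "u \<in> U"
  have "\<sigma> (\<lambda>v. \<Sum>w\<in>S. a u w * mono w v) \<in> Lreal n ord b (b * deg n u + c)"
    using u by (intro sigma_poly_Lreal assms(1-3) assms(5))
  then have "psmult (\<sigma> (\<lambda>v. \<Sum>w\<in>S. a u w * mono w v)) (mono u) \<in>
      Lreal n ord b ((b * deg n u + c) + - b * deg n u)"
    using u assms(4) by (intro Lreal_mult mono_Lreal) auto
  then show "psmult (\<sigma> (\<lambda>v. \<Sum>w\<in>S. a u w * mono w v)) (mono u) \<in> Lreal n ord b c"
    by simp
qed

lemma sigma_digits_cong:
  assumes "S \<subseteq> exps n" "U \<subseteq> exps n"
  shows "ps_cong \<pi> (\<lambda>v. \<Sum>u\<in>U. psmult (\<sigma> (\<lambda>v. \<Sum>w\<in>S. a u w * mono w v)) (mono u) v)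
                    (\<lambda>v. \<Sum>u\<in>U. \<Sum>w\<in>S. a u w * mono (\<lambda>i. q * w i + u i) v)"
proof (rule ps_cong_sum)
  fix u assume u: "u \<in> U"
  have "ps_cong \<pi> (\<lambda>v. \<Sum>w\<in>S. pssmult (a u w) (\<sigma> (mono w)) v)
      (\<lambda>v. \<Sum>w\<in>S. pssmult (a u w) (mono (\<lambda>i. q * w i)) v)"
    using assms(1) by (intro ps_cong_sum ps_cong_smult sigma_mono_cong) auto
  then have "ps_cong \<pi> (\<sigma> (\<lambda>v. \<Sum>w\<in>S. a u w * mono w v))
      (\<lambda>v. \<Sum>w\<in>S. pssmult (a u w) (mono (\<lambda>i. q * w i)) v)"
    unfolding sigma_poly[OF assms(1)] by (simp add: pssmult_def)
  then have "ps_cong \<pi> (psmult (\<sigma> (\<lambda>v. \<Sum>w\<in>S. a u w * mono w v)) (mono u))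
      (psmult (\<lambda>v. \<Sum>w\<in>S. pssmult (a u w) (mono (\<lambda>i. q * w i)) v) (mono u))"
    by (rule ps_cong_psmult[OF _ ps_cong_refl])
  moreover have "psmult (pssmult (a u w) (mono (\<lambda>i. q * w i))) (mono u) v =
      a u w * mono (\<lambda>i. q * w i + u i) v" if "w \<in> S" for w v
  proof -
    have "w \<in> exps n" "u \<in> exps n"
      using that assms u by auto
    then show ?thesis
      by (simp only: psmult_smult_left psmult_mono_mono[OF exps_mult]) (simp add: pssmult_def)
  qed
  ultimately show "ps_cong \<pi> (psmult (\<sigma> (\<lambda>v. \<Sum>w\<in>S. a u w * mono w v)) (mono u))
      (\<lambda>v. \<Sum>w\<in>S. a u w * mono (\<lambda>i. q * w i + u i) v)"
    unfolding psmult_sum_left by (simp cong: sum.cong)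
qed

lemma Lreal_decomp_mod_uniformizer:
  fixes b c :: real
  assumes b: "0 < b" "b \<le> real_of_rat b\<sigma>" and f: "f \<in> Lreal n ord b c"
  obtains T g R where "T \<in> Lreal n ord b c" "decomp n ord q \<sigma> T g"
    "\<And>u. u \<in> box n q \<Longrightarrow> g u \<in> Lreal n ord (q * b) c"
    "R \<in> Lreal n ord b (c - 1)" "f = psadd T (pssmult \<pi> R)"
proof -
  obtain D :: nat where D: "(1 - c) / (b * q) \<le> real D"
    using real_arch_simple by blast
  define W where "W = {w \<in> exps n. deg n w \<le> D}"
  define a where "a u w = f (\<lambda>i. q * w i + u i)" for u w
  define P where "P u = (\<lambda>v. \<Sum>w\<in>W. a u w * mono w v)" for u
  define g where "g u = (if u \<in> box n q then P u else (\<lambda>_. 0))" for u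
  define T where "T = (\<lambda>v. \<Sum>u\<in>box n q. psmult (\<sigma> (P u)) (mono u) v)"
  have W: "finite W" "W \<subseteq> exps n"
    using finite_exps_deg_le by (auto simp: W_def)
  have a_ord: "ord_ge ord (q * b * deg n w + (b * deg n u + c)) (a u w)"
    if "u \<in> box n q" "w \<in> W" for u w
  proof -
    have "(\<lambda>i. q * w i + u i) \<in> exps n"
      using that W(2) box_subset_exps by (intro exps_add exps_mult) auto
    then have "ord_ge ord (b * deg n (\<lambda>i. q * w i + u i) + c) (a u w)"
      using f by (simp add: Lreal_def a_def)
    then show ?thesis
      by (simp add: deg_add deg_mult algebra_simps)
  qed
  have g_L: "g u \<in> Lreal n ord (q * b) c" if "u \<in> box n q" for u
    unfolding g_def P_def using that W b(1)
    by (auto intro!: sum_mono_Lreal ord_ge_mono[OF a_ord])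
  then have "g u \<in> A0 n ord" if "u \<in> box n q" for u
    using Lreal_A0[OF _ g_L[OF that]] q_pos b(1) by simp
  then have "decomp n ord q \<sigma> T g"
    by (simp add: decomp_def T_def g_def cong: sum.cong)
  moreover have "T \<in> Lreal n ord b c"
    unfolding T_def P_def using a_ord by (intro sigma_digits_Lreal b W(2) box_subset_exps)
  moreover have "ps_cong \<pi> f T"
  proof -
    have "ps_cong \<pi> T (\<lambda>v. \<Sum>u\<in>box n q. \<Sum>w\<in>W. a u w * mono (\<lambda>i. q * w i + u i) v)"
      unfolding T_def P_def by (rule sigma_digits_cong[OF W(2) box_subset_exps])
    moreover have "ps_cong \<pi> f (\<lambda>v. \<Sum>u\<in>box n q. \<Sum>w\<in>W. a u w * mono (\<lambda>i. q * w i + u i) v)"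
      using ps_cong_truncation[OF q_pos b(1) f D] by (simp add: W_def a_def)
    ultimately show ?thesis
      by (blast intro: ps_cong_sym ps_cong_trans)
  qed
  ultimately show thesis
    using that g_L Lreal_ps_cong_uniformizer[OF f] by metis
qed

lemma decomp_add:
  assumes "decomp n ord q \<sigma> f g" "decomp n ord q \<sigma> f' g'"
  shows "decomp n ord q \<sigma> (psadd f f') (\<lambda>u. psadd (g u) (g' u))"
  unfolding decomp_def
proof (intro conjI allI ballI impI)
  fix u assume u: "u \<in> box n q"
  then show "psadd (g u) (g' u) \<in> A0 n ord"
    using assms A0_add by (simp add: decomp_def)
next
  fix u assume "u \<notin> box n q"
  then show "psadd (g u) (g' u) = (\<lambda>_. 0)"
    using assms by (simp add: decomp_def psadd_def)
next
  have "psmult (\<sigma> (psadd (g u) (g' u))) (mono u) =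
      psadd (psmult (\<sigma> (g u)) (mono u)) (psmult (\<sigma> (g' u)) (mono u))" if "u \<in> box n q" for u
    using assms that by (simp add: decomp_def sigma_add psmult_add_left)
  then show "psadd f f' = (\<lambda>w. \<Sum>u\<in>box n q. psmult (\<sigma> (psadd (g u) (g' u))) (mono u) w)"
    using assms by (simp add: decomp_def psadd_def sum.distrib cong: sum.cong)
qed

lemma decomp_smult:
  assumes "decomp n ord q \<sigma> f g"
  shows "decomp n ord q \<sigma> (pssmult a f) (\<lambda>u. pssmult a (g u))"
  unfolding decomp_def
proof (intro conjI allI ballI impI)
  fix u assume u: "u \<in> box n q"
  then show "pssmult a (g u) \<in> A0 n ord"
    using assms A0_smult by (simp add: decomp_def)
next
  fix u assume "u \<notin> box n q"
  then show "pssmult a (g u) = (\<lambda>_. 0)"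
    using assms by (simp add: decomp_def pssmult_def)
next
  have "psmult (\<sigma> (pssmult a (g u))) (mono u) = pssmult a (psmult (\<sigma> (g u)) (mono u))"
    if "u \<in> box n q" for u
    using assms that by (simp add: decomp_def sigma_smult psmult_smult_left)
  then show "pssmult a f = (\<lambda>w. \<Sum>u\<in>box n q. psmult (\<sigma> (pssmult a (g u))) (mono u) w)"
    using assms by (simp add: decomp_def pssmult_def sum_distrib_left cong: sum.cong)
qed

end

locale dwork_operators = frobenius_lift +
  assumes decomp_unique: "f \<in> A0 n ord \<Longrightarrow> \<exists>!g. decomp n ord q \<sigma> f g"
begin

lemma decomp_Theta: "f \<in> A0 n ord \<Longrightarrow> decomp n ord q \<sigma> f (\<lambda>u. Theta n ord q \<sigma> u f)"
  unfolding Theta_def by (rule theI'[OF decomp_unique]) simp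

lemma Theta_eq: "f \<in> A0 n ord \<Longrightarrow> decomp n ord q \<sigma> f g \<Longrightarrow> Theta n ord q \<sigma> u f = g u"
  using decomp_Theta decomp_unique by blast

lemma Theta_A0: "f \<in> A0 n ord \<Longrightarrow> u \<in> box n q \<Longrightarrow> Theta n ord q \<sigma> u f \<in> A0 n ord"
  using decomp_Theta by (simp add: decomp_def)

lemma Theta_add_smult:
  assumes "f \<in> A0 n ord" "h \<in> A0 n ord"
  shows "Theta n ord q \<sigma> u (psadd f (pssmult a h)) =
    psadd (Theta n ord q \<sigma> u f) (pssmult a (Theta n ord q \<sigma> u h))"
  using Theta_eq[OF A0_add[OF assms(1) A0_smult[OF assms(2)]]
      decomp_add[OF decomp_Theta[OF assms(1)] decomp_smult[OF decomp_Theta[OF assms(2)]]]] .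

lemma Theta_Lreal_approx:
  fixes b c :: real and N :: nat
  assumes b: "0 < b" "b \<le> real_of_rat b\<sigma>"
    and "f \<in> Lreal n ord b c" "u \<in> box n q" "w \<in> exps n"
  shows "ord_ge ord (min (real N) (q * b * deg n w + c)) (Theta n ord q \<sigma> u f w)"
  using assms(3)
proof (induction N arbitrary: c f)
  case 0
  show ?case
    by (rule ord_ge_mono[OF ord_ge_ord]) simp
next
  case (Suc N)
  obtain T g R where T: "T \<in> Lreal n ord b c" "decomp n ord q \<sigma> T g"
    and g: "g u \<in> Lreal n ord (q * b) c" and R: "R \<in> Lreal n ord b (c - 1)"
    and f: "f = psadd T (pssmult \<pi> R)"
    using Lreal_decomp_mod_uniformizer[OF b Suc.prems] assms(4) by metis
  have "T \<in> A0 n ord" "R \<in> A0 n ord"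
    using Lreal_A0 b(1) T(1) R by blast+
  then have "Theta n ord q \<sigma> u f w = g u w + \<pi> * Theta n ord q \<sigma> u R w"
    using Theta_add_smult Theta_eq[OF _ T(2)] by (simp add: f psadd_def pssmult_def)
  moreover have "ord_ge ord (min (Suc N) (q * b * deg n w + c)) (g u w)"
    using g assms(5) by (auto simp: Lreal_def intro: ord_ge_mono)
  moreover have "ord_ge ord (1 + min N (q * b * deg n w + (c - 1))) (\<pi> * Theta n ord q \<sigma> u R w)"
    using ord_ge_mult[OF ord_ge_ord[of ord \<pi>] Suc.IH[OF R]] ord_uniformizer by simp
  then have "ord_ge ord (min (Suc N) (q * b * deg n w + c)) (\<pi> * Theta n ord q \<sigma> u R w)"
    by (rule ord_ge_mono) (simp add: min_def)
  ultimately show ?case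
    by (simp add: ord_ge_add)
qed

lemma Theta_Lreal:
  fixes b c :: real
  assumes "0 < b" "b \<le> real_of_rat b\<sigma>" "f \<in> Lreal n ord b c" "u \<in> box n q"
  shows "Theta n ord q \<sigma> u f \<in> Lreal n ord (q * b) c"
proof -
  have "ord_ge ord (q * b * deg n w + c) (Theta n ord q \<sigma> u f w)" if w: "w \<in> exps n" for w
  proof (cases "Theta n ord q \<sigma> u f w = 0")
    case False
    have "ord_ge ord (min (Suc (ord (Theta n ord q \<sigma> u f w))) (q * b * deg n w + c))
        (Theta n ord q \<sigma> u f w)"
      by (rule Theta_Lreal_approx[OF assms w])
    then show ?thesis
      using False by (auto simp: ord_ge_def min_def split: if_splits)
  qed simp
  moreover have "is_ps n (Theta n ord q \<sigma> u f)"
    using Theta_A0[OF Lreal_A0[OF assms(1,3)] assms(4)] by (simp add: A0_def)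
  ultimately show ?thesis
    by (simp add: Lreal_def)
qed

end

theorem theorem4p5:
  fixes ord :: "'r::{idom,ring_char_0} \<Rightarrow> nat" and \<pi> :: 'r
    and n p q :: nat and \<sigma> :: "'r ps \<Rightarrow> 'r ps" and fs :: "nat \<Rightarrow> 'r ps"
    and b\<sigma> b c :: rat and u :: "nat \<Rightarrow> nat"
  assumes "cdvr ord \<pi> p q"
    and "n \<ge> 1"
    and "frob_lift n ord \<pi> q \<sigma> fs b\<sigma>"
    and free: "\<forall>f\<in>A0 n ord. \<exists>!g. decomp n ord q \<sigma> f g"
    and "u \<in> box n q"
  shows "(0 < b \<and> b \<le> b\<sigma> \<longrightarrow>
           Theta n ord q \<sigma> u ` L n ord b c \<subseteq> L n ord (of_nat q * b) c)
         \<and> Theta n ord q \<sigma> u ` A n ord \<subseteq> A n ord"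
proof -
  interpret dwork_operators ord \<pi> n q \<sigma> fs b\<sigma>
    using assms cdvr_imp_discrete_valuation[OF assms(1)] cdvr_imp_q_pos[OF assms(1)]
    by (simp add: dwork_operators_def frobenius_lift_def frobenius_lift_axioms_def
        dwork_operators_axioms_def)
  have L: "Theta n ord q \<sigma> u ` L n ord b' c' \<subseteq> L n ord (of_nat q * b') c'"
    if "0 < b'" "b' \<le> b\<sigma>" for b' c'
    using Theta_Lreal[of "real_of_rat b'"] that assms(5)
    by (auto simp: L_eq_Lreal of_rat_mult of_rat_less_eq)
  have "Theta n ord q \<sigma> u f \<in> A n ord" if f: "f \<in> A n ord" for f
  proof -
    have "0 < b\<sigma>"
      using assms(3) by (simp add: frob_lift_def)
    then obtain b' c' where "0 < b'" "b' \<le> b\<sigma>" "f \<in> L n ord b' c'"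
      using A_imp_L[OF f] by blast
    then have "Theta n ord q \<sigma> u f \<in> L n ord (of_nat q * b') c'"
      using L by blast
    moreover have "0 < real q * real_of_rat b'"
      using q_pos \<open>0 < b'\<close> by simp
    ultimately show ?thesis
      using Lreal_A by (auto simp: L_eq_Lreal of_rat_mult)
  qed
  then show ?thesis
    using L by blast
qed

end
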